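(* There exists an absolute constant $C$ such that the following holds. Let $N\in\mathbb N\cup\{0\}$, $\kappa\in(0,1)$, and $\rho_0(r,\theta)=\sum_{\ell=0}^{2^N-1}\chi_{(\ell2^{-N},(\ell+1)2^{-N}]}(r)f^\ell(\theta)$ with each $f^\ell\in L^\infty$ $2\pi$-periodic and $\int_0^{2\pi}f^\ell=0$; let $\rho$ be the corresponding solution. Then for every integer $M\le N$ and every $Q\in\mathcal Q_M$: (a) if $t\ge C\frac{2^N}{\kappa}$, then $\big|\fint_Q\rho(t,\cdot)\big|\le\frac\kappa4\|\rho(t,\cdot)\|_{L^\infty}$; (b) if $t\ge C2^{M+N}$, then $\big|\fint_Q\rho(t,\cdot)\big|\le2^{-M}\|\rho(t,\cdot)\|_{L^\infty}$.
   Context: $B_1\subset\mathbb R^2$ open unit disk, polar coordinates $(r,\theta)$, $\chi_I$ indicator of $I$, $\fint_Q=\frac1{|Q|}\int_Q$. Velocity $u(r,\theta)=2\pi r^2(\sin\theta,-\cos\theta)$; $\rho(t,\cdot)$ solves $\partial_t\rho+\operatorname{div}(u\rho)=0$, $\rho(0)=\rho_0$, explicitly $\rho(t,r,\theta)=\rho_0(r,\theta+2\pi tr)$. Annular tiling: for $M\in\mathbb N$, $i=0,\dots,2^M-1$, $j=0,\dots,i$, $Q^M_{ij}=\{(r,\theta): r\in(i2^{-M},(i+1)2^{-M}],\ \theta\in 2\pi(\tfrac{j}{i+1},\tfrac{j+1}{i+1}]\}$; $\mathcal Q_M$ is the family of all $Q^M_{ij}$. *)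

theory Defs
  imports "HOL-Analysis.Analysis" "HOL-Probability.Essential_Supremum"
begin

text \<open>Everything is written in polar coordinates (r, theta); a point of the plane is
  represented by the pair (r, theta), and Lebesgue measure of the plane becomes
  r dr dtheta.  The open unit disk (up to the null set {0}) is parametrised by
  r in (0,1], theta in (0, 2 pi].\<close>

definition disk_polar :: "(real \<times> real) set" where
  "disk_polar = {0<..1} \<times> {0<..2*pi}"

definition rho0 :: "nat \<Rightarrow> (nat \<Rightarrow> real \<Rightarrow> real) \<Rightarrow> real \<Rightarrow> real \<Rightarrow> real" where
  "rho0 N f r \<theta> = (\<Sum>l<2^N. indicator {real l / 2^N <.. (real l + 1) / 2^N} r * f l \<theta>)"

definition rho :: "nat \<Rightarrow> (nat \<Rightarrow> real \<Rightarrow> real) \<Rightarrow> real \<Rightarrow> real \<times> real \<Rightarrow> real" where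
  "rho N f t x = rho0 N f (fst x) (snd x + 2 * pi * t * fst x)"

definition Qcell :: "nat \<Rightarrow> nat \<Rightarrow> nat \<Rightarrow> (real \<times> real) set" where
  "Qcell M i j = {real i / 2^M <.. (real i + 1) / 2^M} \<times>
                 {2 * pi * (real j / (real i + 1)) <.. 2 * pi * ((real j + 1) / (real i + 1))}"

definition Qfam :: "nat \<Rightarrow> (real \<times> real) set set" where
  "Qfam M = {Qcell M i j | i j. i < 2^M \<and> j \<le> i}"

text \<open>Average over Q with respect to the planar Lebesgue measure, i.e. r dr dtheta.\<close>
definition polar_avg :: "(real \<times> real) set \<Rightarrow> (real \<times> real \<Rightarrow> real) \<Rightarrow> real" where
  "polar_avg Q g = (LINT x:Q|lborel. fst x * g x) / (LINT x:Q|lborel. fst x)"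

text \<open>L^infinity norm on the unit disk (essential supremum; null sets of r dr dtheta on
  r > 0 coincide with Lebesgue null sets).\<close>
definition Linf_disk :: "(real \<times> real \<Rightarrow> real) \<Rightarrow> ereal" where
  "Linf_disk g = esssup (restrict_space lborel disk_polar) (\<lambda>x. ereal \<bar>g x\<bar>)"

end

theory Submission
  imports Defs
begin

text \<open>
  On the dyadic annulus r \<in> (l/2^N, (l+1)/2^N] the solution is f^l(\<theta> + 2\<pi>tr), so its integral
  over an angular window (a, b] equals W(2\<pi>tr), where W(s) is the integral of f^l over
  (a + s, b + s]. W is 2\<pi>-periodic with mean zero and |W| \<le> (b - a) sup|f^l|, so its primitive is
  bounded by 2\<pi> (b - a) sup|f^l|, and one integration by parts in r bounds the contribution of
  the annulus to the integral of r \<rho> over a cell by 2 (b - a) sup|f^l| r/t. A cell of Q_M meets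
  2^(N-M) annuli while its area is at least (b - a) r/2^(M+1); thus the average is at most
  4 \<cdot> 2^N \<parallel>\<rho>(t)\<parallel>/t, which gives both claims with C = 16. Finally |f^l| \<le> \<parallel>\<rho>(t)\<parallel> almost
  everywhere, because almost every circle of the annulus carries a translate of f^l over a full period.
\<close>

section \<open>Periodic functions and oscillatory integrals\<close>

lemma set_integrable_Icc_bounded:
  fixes g :: "real \<Rightarrow> real"
  assumes [measurable]: "g \<in> borel_measurable borel" and "\<And>x. x \<in> {c..d} \<Longrightarrow> \<bar>g x\<bar> \<le> K"
  shows "set_integrable lborel {c..d} g"
  unfolding set_integrable_def
  by (rule integrableI_bounded_set_indicator[where B=K]) (use assms in \<open>auto simp: emeasure_lborel_Icc_eq\<close>)

lemma integrable_on_Icc_bounded: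
  fixes g :: "real \<Rightarrow> real"
  assumes "g \<in> borel_measurable borel" and "\<And>x. x \<in> {c..d} \<Longrightarrow> \<bar>g x\<bar> \<le> K"
  shows "g integrable_on {c..d}"
  using set_integrable_Icc_bounded[OF assms] by (rule set_borel_integral_eq_integral(1))

lemma set_integral_Ioc_eq_integral:
  fixes g :: "real \<Rightarrow> real"
  assumes "g \<in> borel_measurable borel" and "\<And>x. x \<in> {c..d} \<Longrightarrow> \<bar>g x\<bar> \<le> K"
  shows "(LINT x:{c<..d}|lborel. g x) = integral {c..d} g"
proof -
  have "AE x in lborel. (x \<in> {c<..d}) = (x \<in> {c..d})"
    by (rule AE_mp[OF AE_lborel_singleton[of c] AE_I2]) auto
  then have "(LINT x:{c<..d}|lborel. g x) = (LINT x:{c..d}|lborel. g x)"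
    by (intro set_integral_cong_set) (use assms(1) in \<open>auto simp: set_borel_measurable_def\<close>)
  also have "\<dots> = integral {c..d} g"
    by (rule set_borel_integral_eq_integral(2)[OF set_integrable_Icc_bounded[OF assms]])
  finally show ?thesis .
qed

lemma abs_integral_le:
  fixes h :: "real \<Rightarrow> real"
  assumes "h integrable_on {u..v}" "u \<le> v" "\<And>x. x \<in> {u..v} \<Longrightarrow> \<bar>h x\<bar> \<le> K"
  shows "\<bar>integral {u..v} h\<bar> \<le> K * (v - u)"
proof -
  have "0 \<le> K" using assms(2) assms(3)[of u] by auto
  then have "norm (integral (cbox u v) h) \<le> K * Henstock_Kurzweil_Integration.content (cbox u v)"
    by (intro has_integral_bound[where f=h]) (use assms in auto)
  then show ?thesis using assms by (simp add: content_real)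
qed

lemma periodic_add_int:
  fixes g :: "real \<Rightarrow> 'a"
  assumes "\<And>y. g (y + 2*pi) = g y"
  shows "g (y + 2*pi*real_of_int k) = g y"
proof (induction k rule: int_induct[where k=0])
  case (step1 i)
  then show ?case using assms[of "y + 2*pi*real_of_int i"] by (simp add: algebra_simps)
next
  case (step2 i)
  then show ?case using assms[of "y + 2*pi*real_of_int (i - 1)"] by (simp add: algebra_simps)
qed simp

lemma periodic_nonneg_add_nat:
  fixes g :: "real \<Rightarrow> 'a"
  assumes "\<And>y. 0 \<le> y \<Longrightarrow> g (y + 2*pi) = g y" and "0 \<le> y"
  shows "g (y + 2*pi*real n) = g y"
proof (induction n)
  case (Suc n)
  then show ?case using assms(1)[of "y + 2*pi*real n"] assms(2) by (simp add: algebra_simps)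
qed simp

lemma periodic_nonneg_bounded:
  fixes h :: "real \<Rightarrow> real"
  assumes per: "\<And>y. 0 \<le> y \<Longrightarrow> h (y + 2*pi) = h y"
    and bnd: "\<And>y. y \<in> {0..2*pi} \<Longrightarrow> \<bar>h y\<bar> \<le> K" and x: "0 \<le> x"
  shows "\<bar>h x\<bar> \<le> K"
proof -
  define n where "n = nat \<lfloor>x / (2*pi)\<rfloor>"
  define y where "y = x - 2*pi*real n"
  have "real n = of_int \<lfloor>x / (2*pi)\<rfloor>"
    unfolding n_def using x by simp
  then have "real n \<le> x / (2*pi)" "x / (2*pi) < real n + 1"
    by linarith+
  then have "y \<in> {0..2*pi}"
    unfolding y_def by (auto simp: field_simps)
  moreover have "h x = h y"
    using periodic_nonneg_add_nat[where g=h, OF per, of y n] \<open>y \<in> {0..2*pi}\<close> by (simp add: y_def)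
  ultimately show ?thesis using bnd by simp
qed

lemma integral_periodic_split:
  fixes h :: "real \<Rightarrow> real"
  assumes int: "\<And>d. 0 \<le> d \<Longrightarrow> h integrable_on {0..d}"
    and per: "\<And>y. 0 \<le> y \<Longrightarrow> h (y + 2*pi) = h y" and c: "0 \<le> c"
  shows "integral {0..c + 2*pi} h = integral {0..2*pi} h + integral {0..c} h"
proof -
  have "integral {0..c + 2*pi} h = integral {0..2*pi} h + integral {2*pi..c + 2*pi} h"
    using Henstock_Kurzweil_Integration.integral_combine[of 0 "2*pi" "c + 2*pi" h] int[of "c + 2*pi"] c
    by simp
  also have "integral {2*pi..c + 2*pi} h = integral {2*pi - 2*pi..c + 2*pi - 2*pi} (\<lambda>x. h (x + 2*pi))"
    by (rule integral_shift_real_ivl[symmetric])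
  also have "\<dots> = integral {0..c} h"
    by (simp, intro integral_cong per) auto
  finally show ?thesis .
qed

lemma primitive_periodic_if_mean_zero:
  fixes h :: "real \<Rightarrow> real"
  assumes "\<And>d. 0 \<le> d \<Longrightarrow> h integrable_on {0..d}"
    and "\<And>y. 0 \<le> y \<Longrightarrow> h (y + 2*pi) = h y"
    and "integral {0..2*pi} h = 0" and "0 \<le> x"
  shows "integral {0..x + 2*pi} h = integral {0..x} h"
  using integral_periodic_split[of h x] assms by simp

lemma integral_periodic_translate:
  fixes h :: "real \<Rightarrow> real"
  assumes int: "\<And>d. 0 \<le> d \<Longrightarrow> h integrable_on {0..d}"
    and per: "\<And>y. 0 \<le> y \<Longrightarrow> h (y + 2*pi) = h y" and c: "0 \<le> c"
  shows "integral {0..2*pi} (\<lambda>s. h (c + s)) = integral {0..2*pi} h"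
proof -
  have "integral {0..2*pi} (\<lambda>s. h (c + s)) = integral {c - c..c + 2*pi - c} (\<lambda>s. h (s + c))"
    by (simp add: add.commute)
  also have "\<dots> = integral {c..c + 2*pi} h"
    by (rule integral_shift_real_ivl)
  also have "\<dots> = integral {0..c + 2*pi} h - integral {0..c} h"
    using Henstock_Kurzweil_Integration.integral_combine[of 0 c "c + 2*pi" h] int[of "c + 2*pi"] c
    by simp
  also have "\<dots> = integral {0..2*pi} h"
    using integral_periodic_split[of h c] int per c by simp
  finally show ?thesis .
qed

lemma abs_primitive_periodic_mean_zero_le:
  fixes G :: "real \<Rightarrow> real"
  assumes int: "\<And>d. 0 \<le> d \<Longrightarrow> G integrable_on {0..d}"
    and per: "\<And>s. 0 \<le> s \<Longrightarrow> G (s + 2*pi) = G s"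
    and mean: "integral {0..2*pi} G = 0"
    and bnd: "\<And>s. 0 \<le> s \<Longrightarrow> \<bar>G s\<bar> \<le> K" and x: "0 \<le> x"
  shows "\<bar>integral {0..x} G\<bar> \<le> 2*pi*K"
proof (rule periodic_nonneg_bounded[OF _ _ x])
  show "integral {0..y + 2*pi} G = integral {0..y} G" if "0 \<le> y" for y
    using primitive_periodic_if_mean_zero[OF int per mean that] .
  show "\<bar>integral {0..y} G\<bar> \<le> 2*pi*K" if y: "y \<in> {0..2*pi}" for y
  proof -
    have "\<bar>integral {0..y} G\<bar> \<le> K * (y - 0)"
      by (rule abs_integral_le) (use int bnd y in auto)
    also have "\<dots> \<le> 2*pi*K"
      using y bnd[of 0] by (simp add: mult.commute mult_left_mono)
    finally show ?thesis .
  qed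
qed

lemma integral_weighted_periodic_mean_zero_le:
  fixes G :: "real \<Rightarrow> real"
  assumes cont: "\<And>X. continuous_on {0..X} G"
    and per: "\<And>s. 0 \<le> s \<Longrightarrow> G (s + 2*pi) = G s"
    and mean: "integral {0..2*pi} G = 0"
    and bnd: "\<And>s. 0 \<le> s \<Longrightarrow> \<bar>G s\<bar> \<le> K"
    and u: "0 \<le> u0" "u0 \<le> u1"
  shows "\<bar>integral {u0..u1} (\<lambda>u. u * G u)\<bar> \<le> 4 * pi * K * u1"
proof -
  define H where "H x = integral {0..x} G" for x
  have int: "G integrable_on {0..d}" for d
    by (rule integrable_continuous_real[OF cont])
  have H_bnd: "\<bar>H x\<bar> \<le> 2*pi*K" if "0 \<le> x" for x
    unfolding H_def by (rule abs_primitive_periodic_mean_zero_le[OF int per mean bnd that])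
  \<comment> \<open>Integrate by parts against the bounded primitive H.\<close>
  have "(H has_real_derivative G x) (at x within {u0..u1})" if x: "x \<in> {u0..u1}" for x
  proof -
    have "(H has_vector_derivative G x) (at x within {0..u1})"
      unfolding H_def[abs_def] by (rule integral_has_vector_derivative[OF cont]) (use x u in auto)
    then show ?thesis
      by (simp add: has_real_derivative_iff_has_vector_derivative has_vector_derivative_within_subset u)
  qed
  then have "((\<lambda>x. H x + x * G x) has_integral (u1 * H u1 - u0 * H u0)) {u0..u1}"
    by (intro fundamental_theorem_of_calculus[OF u(2)])
       (auto intro!: derivative_eq_intros simp: has_real_derivative_iff_has_vector_derivative[symmetric])
  moreover have "H integrable_on {u0..u1}"
    unfolding H_def[abs_def]
    by (intro integrable_continuous_real continuous_on_subset[OF indefinite_integral_continuous_1[OF int]])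
       (use u in auto)
  moreover have "(\<lambda>u. u * G u) integrable_on {u0..u1}"
    by (intro integrable_continuous_real continuous_intros continuous_on_subset[OF cont[of u1]]) (use u in auto)
  ultimately have parts: "integral {u0..u1} (\<lambda>u. u * G u) = u1 * H u1 - u0 * H u0 - integral {u0..u1} H"
    using integral_add[of H "{u0..u1}" "\<lambda>u. u * G u"] by (simp add: integral_unique)
  have "\<bar>integral {u0..u1} H\<bar> \<le> 2*pi*K * (u1 - u0)"
    by (rule abs_integral_le) (use \<open>H integrable_on {u0..u1}\<close> H_bnd u in auto)
  moreover have "\<bar>u1 * H u1\<bar> \<le> u1 * (2*pi*K)" "\<bar>u0 * H u0\<bar> \<le> u0 * (2*pi*K)"
    using H_bnd u by (auto simp: abs_mult mult_left_mono)
  ultimately have "\<bar>integral {u0..u1} (\<lambda>u. u * G u)\<bar> \<le> u1 * (2*pi*K) + u0 * (2*pi*K) + 2*pi*K * (u1 - u0)"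
    unfolding parts by linarith
  also have "\<dots> = 4 * pi * K * u1"
    by (simp add: algebra_simps)
  finally show ?thesis .
qed

lemma integral_weighted_stretch:
  fixes G :: "real \<Rightarrow> real"
  assumes m: "0 < m"
  shows "integral {p..q} (\<lambda>r. r * G (m * r)) = integral {m*p..m*q} (\<lambda>u. u * G u) / m^2"
proof -
  have img: "(\<lambda>x. x / m) ` {m*p..m*q} = {p..q}"
    using m by simp
  have "integral {p..q} (\<lambda>r. r * G (m * r)) = integral {p..q} (\<lambda>r. (1/m) * ((m * r) * G (m * r)))"
    using m by (intro integral_cong) simp
  also have "\<dots> = (1/m) * integral {p..q} (\<lambda>r. (m * r) * G (m * r))"
    by (rule integral_mult_right)
  also have "\<dots> = (1/m) * ((1/m) * integral {m*p..m*q} (\<lambda>u. u * G u))"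
    using integral_stretch_real[where m=m and f="\<lambda>u. u * G u" and a="m*p" and b="m*q"] m
    by (simp add: img)
  finally show ?thesis by (simp add: power2_eq_square)
qed

lemma oscillatory_integral_le:
  fixes G :: "real \<Rightarrow> real"
  assumes "\<And>X. continuous_on {0..X} G"
    and "\<And>s. 0 \<le> s \<Longrightarrow> G (s + 2*pi) = G s"
    and "integral {0..2*pi} G = 0"
    and "\<And>s. 0 \<le> s \<Longrightarrow> \<bar>G s\<bar> \<le> K"
    and m: "0 < m" and pq: "0 \<le> p" "p \<le> q"
  shows "\<bar>integral {p..q} (\<lambda>r. r * G (m * r))\<bar> \<le> 4 * pi * K * q / m"
proof -
  have "\<bar>integral {m*p..m*q} (\<lambda>u. u * G u)\<bar> \<le> 4 * pi * K * (m*q)"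
    by (rule integral_weighted_periodic_mean_zero_le) (use assms in auto)
  then have "\<bar>integral {m*p..m*q} (\<lambda>u. u * G u)\<bar> / m^2 \<le> 4 * pi * K * (m*q) / m^2"
    by (rule divide_right_mono) simp
  also have "\<dots> = 4 * pi * K * q / m"
    using m by (simp add: power2_eq_square)
  finally show ?thesis
    using m by (simp add: integral_weighted_stretch abs_divide)
qed

section \<open>Window integrals of periodic profiles\<close>

definition window_integral :: "(real \<Rightarrow> real) \<Rightarrow> real \<Rightarrow> real \<Rightarrow> real \<Rightarrow> real" where
  "window_integral g a b s = integral {a + s..b + s} g"

locale periodic_profile =
  fixes g :: "real \<Rightarrow> real" and L :: real
  assumes measurable [measurable]: "g \<in> borel_measurable borel"
    and bounded: "\<And>\<theta>. \<bar>g \<theta>\<bar> \<le> L"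
    and periodic: "\<And>\<theta>. g (\<theta> + 2*pi) = g \<theta>"
    and mean_zero: "integral {0..2*pi} g = 0"
begin

lemma integrable_on: "g integrable_on {c..d}"
  by (rule integrable_on_Icc_bounded[OF measurable bounded])

lemma window_integral_eq_diff:
  assumes "0 \<le> a + s" "a \<le> b"
  shows "window_integral g a b s = integral {0..b + s} g - integral {0..a + s} g"
  using Henstock_Kurzweil_Integration.integral_combine[of 0 "a + s" "b + s" g] integrable_on assms
  by (simp add: window_integral_def)

lemma abs_window_integral_le:
  assumes "a \<le> b"
  shows "\<bar>window_integral g a b s\<bar> \<le> (b - a) * L"
  unfolding window_integral_def
  using abs_integral_le[OF integrable_on, of "a + s" "b + s" L] bounded assms by (simp add: mult.commute)

lemma window_integral_periodic: "window_integral g a b (s + 2*pi) = window_integral g a b s"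
proof -
  have "window_integral g a b s = integral {(a + s + 2*pi) - 2*pi..(b + s + 2*pi) - 2*pi} (\<lambda>x. g (x + 2*pi))"
    by (simp add: periodic window_integral_def)
  also have "\<dots> = integral {a + s + 2*pi..b + s + 2*pi} g"
    by (rule integral_shift_real_ivl)
  finally show ?thesis
    by (simp add: window_integral_def add.assoc)
qed

lemma primitive_continuous: "continuous_on {0..X} (\<lambda>x. integral {0..x} g)"
  by (rule indefinite_integral_continuous_1[OF integrable_on])

lemma window_integral_continuous:
  assumes "0 \<le> a" "a \<le> b"
  shows "continuous_on {0..X} (window_integral g a b)"
proof -
  have "continuous_on {0..X} (\<lambda>s. integral {0..b + s} g - integral {0..a + s} g)"
    using assms
    by (intro continuous_on_diff continuous_on_compose2[OF primitive_continuous[of "b + X"]]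
          continuous_on_compose2[OF primitive_continuous[of "a + X"]] continuous_intros) auto
  then show ?thesis
    by (rule continuous_on_cong[THEN iffD1, rotated 2]) (use assms window_integral_eq_diff in auto)
qed

lemma window_integral_mean_zero:
  assumes "0 \<le> a" "a \<le> b"
  shows "integral {0..2*pi} (window_integral g a b) = 0"
proof -
  let ?F = "\<lambda>x. integral {0..x} g"
  have F_int: "?F integrable_on {0..d}" for d
    by (rule integrable_continuous_real[OF primitive_continuous])
  have F_per: "?F (x + 2*pi) = ?F x" if "0 \<le> x" for x
    by (rule primitive_periodic_if_mean_zero) (use integrable_on periodic mean_zero that in auto)
  have shift_int: "(\<lambda>s. ?F (c + s)) integrable_on {0..2*pi}" if "0 \<le> c" for c
    using that by (intro integrable_continuous_real continuous_on_compose2[OF primitive_continuous[of "c + 2*pi"]]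
        continuous_intros) auto
  have "integral {0..2*pi} (window_integral g a b) = integral {0..2*pi} (\<lambda>s. ?F (b + s) - ?F (a + s))"
    using assms by (intro integral_cong) (simp add: window_integral_eq_diff add.commute)
  also have "\<dots> = integral {0..2*pi} (\<lambda>s. ?F (b + s)) - integral {0..2*pi} (\<lambda>s. ?F (a + s))"
    using assms by (intro integral_diff shift_int) auto
  also have "\<dots> = 0"
    using integral_periodic_translate[of ?F, OF F_int F_per] assms by simp
  finally show ?thesis .
qed

lemma window_integral_oscillatory_le:
  assumes "0 \<le> a" "a \<le> b" "0 < t" "0 \<le> p" "p \<le> q"
  shows "\<bar>integral {p..q} (\<lambda>r. r * window_integral g a b (2*pi*t * r))\<bar> \<le> 2 * (b - a) * L / t * q"
proof -
  have "\<bar>integral {p..q} (\<lambda>r. r * window_integral g a b (2*pi*t * r))\<bar> \<le> 4 * pi * ((b - a) * L) * q / (2*pi*t)"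
    by (rule oscillatory_integral_le)
       (use assms window_integral_continuous window_integral_periodic window_integral_mean_zero
          abs_window_integral_le in auto)
  also have "\<dots> = 2 * (b - a) * L / t * q"
    using assms by (simp add: field_simps)
  finally show ?thesis .
qed

end

section \<open>The solution on dyadic annuli and its essential supremum\<close>

lemma AE_lborel_translate:
  fixes P :: "real \<Rightarrow> bool"
  assumes [measurable]: "Measurable.pred borel P" and ae: "AE x in lborel. P x"
  shows "AE x in lborel. P (x + d)"
proof -
  have "AE x in distr lborel borel ((+) d). P x"
    by (subst lborel_distr_plus) (rule ae)
  then show ?thesis
    by (subst (asm) AE_distr_iff) (auto simp: add.commute)
qed

lemma AE_lborel_ex_in_Ioo:
  assumes ae: "AE x in lborel. R x" and pq: "(p::real) < q"
  shows "\<exists>x\<in>{p<..<q}. R x"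
proof (rule ccontr)
  assume "\<not> (\<exists>x\<in>{p<..<q}. R x)"
  moreover obtain Z where "{x \<in> space lborel. \<not> R x} \<subseteq> Z" "emeasure lborel Z = 0" "Z \<in> sets lborel"
    using ae by (rule AE_E)
  ultimately have "emeasure lborel {p<..<q} \<le> emeasure lborel Z"
    by (intro emeasure_mono) auto
  then show False
    using pq \<open>emeasure lborel Z = 0\<close> by simp
qed

lemma AE_periodic_pred:
  fixes P :: "real \<Rightarrow> bool"
  assumes [measurable]: "Measurable.pred borel P"
    and per: "\<And>\<theta>. P (\<theta> + 2*pi) = P \<theta>"
    and ae: "AE \<theta> in lborel. \<theta> \<in> {0<..2*pi} \<longrightarrow> P (\<theta> + c)"
  shows "AE \<theta> in lborel. P \<theta>"
proof -
  have "AE \<theta> in lborel. \<theta> + (- c - 2*pi*real_of_int k) \<in> {0<..2*pi} \<longrightarrow> P \<theta>" for k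
  proof -
    have "AE \<theta> in lborel. \<theta> + (- c - 2*pi*real_of_int k) \<in> {0<..2*pi}
        \<longrightarrow> P ((\<theta> + (- c - 2*pi*real_of_int k)) + c)"
      by (rule AE_lborel_translate[OF _ ae]) measurable
    moreover have "P ((\<theta> + (- c - 2*pi*real_of_int k)) + c) = P \<theta>" for \<theta>
      using periodic_add_int[where g=P, OF per, of "\<theta> - 2*pi*real_of_int k" k] by simp
    ultimately show ?thesis by (simp only:)
  qed
  then have "AE \<theta> in lborel. \<forall>k::int. \<theta> + (- c - 2*pi*real_of_int k) \<in> {0<..2*pi} \<longrightarrow> P \<theta>"
    by (subst AE_all_countable) blast
  then show ?thesis
  proof (rule AE_mp[OF _ AE_I2], intro impI)
    fix \<theta> assume H: "\<forall>k::int. \<theta> + (- c - 2*pi*real_of_int k) \<in> {0<..2*pi} \<longrightarrow> P \<theta>"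
    define x where "x = (\<theta> - c) / (2*pi)"
    have "\<theta> + (- c - 2*pi*real_of_int (\<lceil>x\<rceil> - 1)) = 2*pi*(x - real_of_int (\<lceil>x\<rceil> - 1))"
      unfolding x_def by (simp add: field_simps)
    moreover have "x - real_of_int (\<lceil>x\<rceil> - 1) \<in> {0<..1}"
      by simp linarith
    ultimately have "\<theta> + (- c - 2*pi*real_of_int (\<lceil>x\<rceil> - 1)) \<in> {0<..2*pi}"
      by auto
    then show "P \<theta>" using H by blast
  qed
qed

abbreviation dyadic_Ioc :: "nat \<Rightarrow> nat \<Rightarrow> real set" where
  "dyadic_Ioc N l \<equiv> {real l / 2^N <.. (real l + 1) / 2^N}"

lemma dyadic_Ioc_disjoint:
  assumes "r \<in> dyadic_Ioc N l" "r \<in> dyadic_Ioc N l'"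
  shows "l' = l"
proof -
  have "real l / 2^N < (real l' + 1) / 2^N" "real l' / 2^N < (real l + 1) / 2^N"
    using assms by auto
  then have "real l < real l' + 1" "real l' < real l + 1"
    by (simp_all add: divide_less_cancel)
  then show ?thesis by linarith
qed

lemma dyadic_endpoints_unit:
  assumes "l < 2^N"
  shows "0 \<le> real l / 2^N" "(real l + 1) / 2^N \<le> 1"
proof -
  have "real (l + 1) \<le> real (2^N)"
    using assms by (simp only: of_nat_le_iff Suc_eq_plus1[symmetric] Suc_le_eq)
  then show "(real l + 1) / 2^N \<le> 1"
    by simp
qed simp

lemma dyadic_Ioc_subset_unit:
  assumes "l < 2^N"
  shows "dyadic_Ioc N l \<subseteq> {0<..1}"
  using dyadic_endpoints_unit[OF assms] by (auto simp only: greaterThanAtMost_iff subset_iff)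

lemma rho_on_dyadic_Ioc:
  assumes l: "l < 2^N" and r: "r \<in> dyadic_Ioc N l"
  shows "rho N f t (r, \<theta>) = f l (\<theta> + 2*pi*t*r)"
proof -
  have "indicator (dyadic_Ioc N l') r * f l' \<theta>' = (if l' = l then f l \<theta>' else 0)" for l' \<theta>'
  proof (cases "l' = l")
    case False
    then have "r \<notin> dyadic_Ioc N l'"
      using dyadic_Ioc_disjoint[OF r] by blast
    then show ?thesis using False by simp
  qed (use r in simp)
  then show ?thesis
    using l by (simp add: rho_def rho0_def)
qed

lemma rho_measurable:
  assumes "\<And>l. l < 2^N \<Longrightarrow> f l \<in> borel_measurable borel"
  shows "rho N f t \<in> borel_measurable borel"
  unfolding rho_def[abs_def] rho0_def borel_prod[symmetric]
proof (rule borel_measurable_sum)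
  fix l :: nat assume "l \<in> {..<2^N}"
  then have "f l \<in> borel_measurable borel" using assms by simp
  moreover have "(\<lambda>x::real \<times> real. snd x + 2*pi*t*fst x) \<in> borel_measurable (borel \<Otimes>\<^sub>M borel)"
    by measurable
  ultimately have [measurable]: "(\<lambda>x::real \<times> real. f l (snd x + 2*pi*t*fst x)) \<in> borel_measurable (borel \<Otimes>\<^sub>M borel)"
    by (rule measurable_compose[rotated])
  show "(\<lambda>x. indicator (dyadic_Ioc N l) (fst x) * f l (snd x + 2*pi*t*fst x)) \<in> borel_measurable (borel \<Otimes>\<^sub>M borel)"
    by measurable
qed

lemma disk_polar_sets: "disk_polar \<in> sets (lborel \<Otimes>\<^sub>M lborel)"
  unfolding disk_polar_def by (intro pair_measureI) auto

lemma AE_profile_le_Linf_disk: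
  assumes meas: "\<And>l. l < 2^N \<Longrightarrow> f l \<in> borel_measurable borel"
    and l: "l < 2^N" and per: "\<And>\<theta>. f l (\<theta> + 2*pi) = f l \<theta>"
  shows "AE \<theta> in lborel. ereal \<bar>f l \<theta>\<bar> \<le> Linf_disk (rho N f t)"
proof -
  let ?L = "Linf_disk (rho N f t)"
  have [measurable]: "rho N f t \<in> borel_measurable (lborel \<Otimes>\<^sub>M lborel)"
    using rho_measurable[OF meas] by (simp add: lborel_prod)
  have "AE x in restrict_space lborel disk_polar. ereal \<bar>rho N f t x\<bar> \<le> ?L"
    unfolding Linf_disk_def by (rule esssup_AE)
  then have "AE x in lborel. x \<in> disk_polar \<longrightarrow> ereal \<bar>rho N f t x\<bar> \<le> ?L"
    using disk_polar_sets by (subst (asm) AE_restrict_space_iff) (simp_all only: lborel_prod, simp)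
  then have "AE x in lborel \<Otimes>\<^sub>M lborel.
      (fst x, snd x) \<in> disk_polar \<longrightarrow> ereal \<bar>rho N f t (fst x, snd x)\<bar> \<le> ?L"
    by (simp only: lborel_prod prod.collapse)
  then have "AE r in lborel. AE \<theta> in lborel. (r, \<theta>) \<in> disk_polar \<longrightarrow> ereal \<bar>rho N f t (r, \<theta>)\<bar> \<le> ?L"
    by (subst lborel_pair.AE_pair_iff) (use disk_polar_sets in measurable)
  moreover have "real l / 2^N < (real l + 1) / 2^N"
    by (simp add: divide_strict_right_mono)
  \<comment> \<open>Fubini: for some radius in the annulus the bound holds on almost every point of its circle.\<close>
  ultimately obtain r where "r \<in> {real l / 2^N <..< (real l + 1) / 2^N}"
    and ae_r: "AE \<theta> in lborel. (r, \<theta>) \<in> disk_polar \<longrightarrow> ereal \<bar>rho N f t (r, \<theta>)\<bar> \<le> ?L"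
    by (blast dest: AE_lborel_ex_in_Ioo)
  then have r: "r \<in> dyadic_Ioc N l"
    by auto
  then have "0 < r" "r \<le> 1"
    using dyadic_Ioc_subset_unit[OF l] by auto
  then have ae_shifted: "AE \<theta> in lborel. \<theta> \<in> {0<..2*pi} \<longrightarrow> ereal \<bar>f l (\<theta> + 2*pi*t*r)\<bar> \<le> ?L"
    using ae_r rho_on_dyadic_Ioc[OF l, of r f t] r by (auto simp: disk_polar_def elim!: AE_mp)
  have [measurable]: "f l \<in> borel_measurable borel"
    using meas l by simp
  show ?thesis
    by (rule AE_periodic_pred[OF _ _ ae_shifted]) (measurable, simp only: per)
qed

lemma AE_rho_eq:
  assumes "\<And>l. l < 2^N \<Longrightarrow> f l \<in> borel_measurable borel" "\<And>l. l < 2^N \<Longrightarrow> g l \<in> borel_measurable borel"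
    and eq: "\<And>l. l < 2^N \<Longrightarrow> AE \<theta> in lborel. f l \<theta> = g l \<theta>"
  shows "AE x in lborel. rho N f t x = rho N g t x"
proof -
  have [measurable]: "rho N f t \<in> borel_measurable (lborel \<Otimes>\<^sub>M lborel)"
    "rho N g t \<in> borel_measurable (lborel \<Otimes>\<^sub>M lborel)"
    using rho_measurable[of N f t] rho_measurable[of N g t] assms(1,2) by (simp_all add: lborel_prod)
  have "AE \<theta> in lborel. f l (\<theta> + 2*pi*t*r) = g l (\<theta> + 2*pi*t*r)" if l: "l < 2^N" for l r
  proof -
    have [measurable]: "f l \<in> borel_measurable borel" "g l \<in> borel_measurable borel"
      using assms(1,2) l by auto
    show ?thesis
      by (rule AE_lborel_translate[OF _ eq[OF l]]) measurable
  qed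
  then have ae_all: "AE \<theta> in lborel. \<forall>l\<in>{..<2^N}. f l (\<theta> + 2*pi*t*r) = g l (\<theta> + 2*pi*t*r)" for r
    by (intro eventually_ball_finite) auto
  have "AE \<theta> in lborel. rho N f t (r, \<theta>) = rho N g t (r, \<theta>)" for r
    by (rule AE_mp[OF ae_all AE_I2]) (auto simp: rho_def rho0_def intro!: sum.cong)
  then have "AE r in lborel. AE \<theta> in lborel. rho N f t (r, \<theta>) = rho N g t (r, \<theta>)"
    by simp
  then have "AE x in lborel \<Otimes>\<^sub>M lborel. rho N f t x = rho N g t x"
    by (subst (asm) lborel_pair.AE_pair_iff) measurable
  then show ?thesis
    by (simp only: lborel_prod)
qed

lemma polar_avg_cong_AE:
  assumes "Q \<in> sets lborel" "g \<in> borel_measurable borel" "h \<in> borel_measurable borel"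
    and "AE x in lborel. g x = h x"
  shows "polar_avg Q g = polar_avg Q h"
proof -
  have [measurable]: "fst \<in> borel_measurable (borel :: (real \<times> real) measure)"
    unfolding borel_prod[symmetric] by measurable
  have "(LINT x:Q|lborel. fst x * g x) = (LINT x:Q|lborel. fst x * h x)"
    unfolding set_lebesgue_integral_def using assms
    by (intro integral_cong_AE) (auto elim: AE_mp)
  then show ?thesis
    by (simp add: polar_avg_def)
qed

text \<open>
  The locale periodic_profile asks for a pointwise bound, whereas the essential supremum of \<rho>
  bounds the profiles only almost everywhere; cutting them off at that level repairs this and
  changes \<rho> only on a null set.
\<close>

definition cutoff :: "real \<Rightarrow> (real \<Rightarrow> real) \<Rightarrow> real \<Rightarrow> real" where
  "cutoff L g \<theta> = (if \<bar>g \<theta>\<bar> \<le> L then g \<theta> else 0)"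

lemma AE_cutoff_eq:
  assumes "AE \<theta> in lborel. \<bar>g \<theta>\<bar> \<le> L"
  shows "AE \<theta> in lborel. cutoff L g \<theta> = g \<theta>"
  by (rule AE_mp[OF assms AE_I2]) (simp add: cutoff_def)

lemma cutoff_measurable [measurable]:
  assumes [measurable]: "g \<in> borel_measurable borel"
  shows "cutoff L g \<in> borel_measurable borel"
  unfolding cutoff_def[abs_def] by measurable

lemma periodic_profile_cutoff:
  assumes [measurable]: "g \<in> borel_measurable borel"
    and per: "\<And>\<theta>. g (\<theta> + 2*pi) = g \<theta>"
    and mean: "(LINT \<theta>:{0..2*pi}|lborel. g \<theta>) = 0"
    and bnd: "AE \<theta> in lborel. \<bar>g \<theta>\<bar> \<le> L" and L: "0 \<le> L"
  shows "periodic_profile (cutoff L g) L"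
proof
  show "\<bar>cutoff L g \<theta>\<bar> \<le> L" for \<theta>
    using L by (simp add: cutoff_def)
  show "cutoff L g (\<theta> + 2*pi) = cutoff L g \<theta>" for \<theta>
    by (simp add: cutoff_def per)
  have "integral {0..2*pi} (cutoff L g) = (LINT \<theta>:{0..2*pi}|lborel. cutoff L g \<theta>)"
    by (rule set_borel_integral_eq_integral(2)[symmetric], rule set_integrable_Icc_bounded[where K=L])
       (use L in \<open>auto simp: cutoff_def\<close>)
  also have "\<dots> = (LINT \<theta>:{0..2*pi}|lborel. g \<theta>)"
    unfolding set_lebesgue_integral_def
    by (rule integral_cong_AE) (use AE_cutoff_eq[OF bnd] in \<open>auto elim!: AE_mp\<close>)
  finally show "integral {0..2*pi} (cutoff L g) = 0"
    using mean by simp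
qed (simp add: cutoff_def)

section \<open>Averages over the cells\<close>

lemma rectangle_sets:
  fixes p q a b :: real
  shows "{p<..q} \<times> {a<..b} \<in> sets (lborel \<Otimes>\<^sub>M lborel)"
  by (intro pair_measureI) (auto simp: greaterThanAtMost_borel)

lemma set_integrable_rectangle_bounded:
  fixes \<phi> :: "real \<times> real \<Rightarrow> real" and p q a b :: real
  assumes "\<phi> \<in> borel_measurable (lborel \<Otimes>\<^sub>M lborel)"
    and "\<And>x. x \<in> {p<..q} \<times> {a<..b} \<Longrightarrow> \<bar>\<phi> x\<bar> \<le> K"
  shows "set_integrable (lborel \<Otimes>\<^sub>M lborel) ({p<..q} \<times> {a<..b}) \<phi>"
proof -
  have "emeasure lborel {p<..q} < \<infinity>" "emeasure lborel {a<..b} < \<infinity>"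
    by (intro emeasure_bounded_finite bounded_Ioc)+
  then show ?thesis
    unfolding set_integrable_def
    by (intro integrableI_bounded_set_indicator[where B=K])
       (use assms rectangle_sets in \<open>auto simp: lborel.emeasure_pair_measure_Times ennreal_mult_less_top\<close>)
qed

lemma set_integral_rectangle_iterated:
  fixes \<phi> :: "real \<times> real \<Rightarrow> real" and p q a b :: real
  assumes meas: "\<phi> \<in> borel_measurable (lborel \<Otimes>\<^sub>M lborel)"
    and bnd: "\<And>x. x \<in> {p<..q} \<times> {a<..b} \<Longrightarrow> \<bar>\<phi> x\<bar> \<le> K"
  shows "(LINT x:{p<..q} \<times> {a<..b}|lborel. \<phi> x)
    = (LINT r:{p<..q}|lborel. (LINT \<theta>:{a<..b}|lborel. \<phi> (r, \<theta>)))"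
proof -
  have "(LINT x:{p<..q} \<times> {a<..b}|lborel. \<phi> x) = (LINT x:{p<..q} \<times> {a<..b}|lborel \<Otimes>\<^sub>M lborel. \<phi> x)"
    by (simp only: lborel_prod)
  also have "\<dots> = (\<integral>r. \<integral>\<theta>. indicator ({p<..q} \<times> {a<..b}) (r, \<theta>) *\<^sub>R \<phi> (r, \<theta>) \<partial>lborel \<partial>lborel)"
    using set_integrable_rectangle_bounded[OF meas bnd]
    unfolding set_lebesgue_integral_def set_integrable_def
    by (rule lborel_pair.integral_fst'[symmetric])
  also have "\<dots> = (LINT r:{p<..q}|lborel. (LINT \<theta>:{a<..b}|lborel. \<phi> (r, \<theta>)))"
    by (simp add: set_lebesgue_integral_def indicator_times mult.assoc)
  finally show ?thesis .
qed

lemma set_integral_fst_rectangle: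
  fixes p q a b :: real
  assumes "0 \<le> p" "p \<le> q" "a \<le> b"
  shows "(LINT x:{p<..q} \<times> {a<..b}|lborel. fst x) = (b - a) * ((q^2 - p^2) / 2)"
proof -
  have "(LINT x:{p<..q} \<times> {a<..b}|lborel. fst x) = (LINT r:{p<..q}|lborel. (LINT \<theta>:{a<..b}|lborel. r))"
    using set_integral_rectangle_iterated[where \<phi>=fst and K=q] assms by force
  also have "\<dots> = (b - a) * (LINT r:{p<..q}|lborel. r)"
    using assms by (simp add: set_lebesgue_integral_def mult.commute)
  also have "(LINT r:{p<..q}|lborel. r) = integral {p..q} (\<lambda>r. r)"
    by (rule set_integral_Ioc_eq_integral[where K=q]) (use assms in auto)
  finally show ?thesis
    using assms by simp
qed

lemma (in periodic_profile) set_integral_translate_eq_window_integral: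
  assumes "a \<le> b"
  shows "(LINT \<theta>:{a<..b}|lborel. g (\<theta> + s)) = window_integral g a b s"
proof -
  have "(LINT \<theta>:{a<..b}|lborel. g (\<theta> + s)) = integral {a..b} (\<lambda>\<theta>. g (\<theta> + s))"
    by (rule set_integral_Ioc_eq_integral[where K=L]) (use bounded in auto)
  also have "\<dots> = integral {(a + s) - s..(b + s) - s} (\<lambda>\<theta>. g (\<theta> + s))"
    by simp
  also have "\<dots> = window_integral g a b s"
    unfolding window_integral_def by (rule integral_shift_real_ivl)
  finally show ?thesis .
qed

lemma abs_fst_mult_rho_le:
  assumes "l < 2^N" "fst x \<in> dyadic_Ioc N l" "\<And>\<theta>. \<bar>f l \<theta>\<bar> \<le> L"
  shows "\<bar>fst x * rho N f t x\<bar> \<le> L"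
proof -
  have "0 \<le> fst x" "fst x \<le> 1"
    using dyadic_Ioc_subset_unit[OF assms(1)] assms(2) by auto
  moreover have "rho N f t x = f l (snd x + 2*pi*t*fst x)"
    using rho_on_dyadic_Ioc[OF assms(1,2), of f t "snd x"] by simp
  moreover have "fst x * \<bar>f l (snd x + 2*pi*t*fst x)\<bar> \<le> \<bar>f l (snd x + 2*pi*t*fst x)\<bar>"
    using calculation by (intro mult_left_le_one_le) auto
  ultimately show ?thesis
    using assms(3)[of "snd x + 2*pi*t*fst x"] by (simp add: abs_mult)
qed

lemma set_integral_dyadic_rectangle:
  assumes meas: "\<And>l. l < 2^N \<Longrightarrow> f l \<in> borel_measurable borel"
    and l: "l < 2^N" and prof: "periodic_profile (f l) L" and ab: "a \<le> b"
  shows "(LINT x:dyadic_Ioc N l \<times> {a<..b}|lborel. fst x * rho N f t x)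
    = integral {real l / 2^N..(real l + 1) / 2^N} (\<lambda>r. r * window_integral (f l) a b (2*pi*t*r))"
proof -
  interpret periodic_profile "f l" L by (rule prof)
  have [measurable]: "rho N f t \<in> borel_measurable (lborel \<Otimes>\<^sub>M lborel)"
    using rho_measurable[OF meas] by (simp add: lborel_prod)
  have "(LINT x:dyadic_Ioc N l \<times> {a<..b}|lborel. fst x * rho N f t x)
      = (LINT r:dyadic_Ioc N l|lborel. (LINT \<theta>:{a<..b}|lborel. fst (r, \<theta>) * rho N f t (r, \<theta>)))"
    by (rule set_integral_rectangle_iterated[where K=L])
       (use abs_fst_mult_rho_le[of l N _ f L t] l bounded in auto)
  also have "\<dots> = (LINT r:dyadic_Ioc N l|lborel. r * (LINT \<theta>:{a<..b}|lborel. f l (\<theta> + 2*pi*t*r)))"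
    by (intro set_lebesgue_integral_cong) (simp_all add: rho_on_dyadic_Ioc[OF l])
  also have "\<dots> = integral {real l / 2^N..(real l + 1) / 2^N}
      (\<lambda>r. r * (LINT \<theta>:{a<..b}|lborel. f l (\<theta> + 2*pi*t*r)))"
  proof (rule set_integral_Ioc_eq_integral[where K="(b - a) * L"])
    show "(\<lambda>r. r * (LINT \<theta>:{a<..b}|lborel. f l (\<theta> + 2*pi*t*r))) \<in> borel_measurable borel"
      unfolding set_lebesgue_integral_def by measurable
    fix r assume "r \<in> {real l / 2^N..(real l + 1) / 2^N}"
    then have "0 \<le> r" "r \<le> 1"
      using dyadic_endpoints_unit[OF l] unfolding atLeastAtMost_iff by linarith+
    moreover have "\<bar>LINT \<theta>:{a<..b}|lborel. f l (\<theta> + 2*pi*t*r)\<bar> \<le> (b - a) * L"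
      using abs_window_integral_le[OF ab] by (simp add: set_integral_translate_eq_window_integral[OF ab])
    ultimately show "\<bar>r * (LINT \<theta>:{a<..b}|lborel. f l (\<theta> + 2*pi*t*r))\<bar> \<le> (b - a) * L"
      by (simp add: abs_mult) (meson abs_ge_zero mult_left_le_one_le order_trans)
  qed
  also have "\<dots> = integral {real l / 2^N..(real l + 1) / 2^N} (\<lambda>r. r * window_integral (f l) a b (2*pi*t*r))"
    by (simp add: set_integral_translate_eq_window_integral[OF ab])
  finally show ?thesis .
qed

lemma indicator_Ioc_split_nat:
  fixes h :: real
  assumes "0 < h" "A \<le> B"
  shows "indicator {real A / h <.. real B / h} r = (\<Sum>l\<in>{A..<B}. indicator {real l / h <.. (real l + 1) / h} r :: real)"
  using assms(2)
proof (induction B rule: dec_induct)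
  case (step B)
  have "real A / h \<le> real B / h" "real B / h \<le> (real B + 1) / h"
    using step.hyps assms(1) by (simp_all add: divide_right_mono)
  then have "{real A / h <.. real (Suc B) / h} = {real A / h <.. real B / h} \<union> {real B / h <.. (real B + 1) / h}"
    by (simp add: ivl_disj_un_two(6) add.commute)
  then show ?case
    using step.IH step.hyps by (simp add: indicator_disj_union)
qed simp

lemma set_integral_Ioc_times_split_dyadic:
  assumes "A \<le> B"
    and int: "\<And>l. l \<in> {A..<B} \<Longrightarrow> set_integrable lborel (dyadic_Ioc N l \<times> S) \<phi>"
  shows "(LINT x:{real A / 2^N <.. real B / 2^N} \<times> S|lborel. \<phi> x)
    = (\<Sum>l\<in>{A..<B}. (LINT x:dyadic_Ioc N l \<times> S|lborel. \<phi> x :: real))"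
proof -
  have split: "indicator {real A / 2^N <.. real B / 2^N} r = (\<Sum>l\<in>{A..<B}. indicator (dyadic_Ioc N l) r :: real)" for r
    by (rule indicator_Ioc_split_nat) (simp_all add: assms(1))
  have ind: "indicator ({real A / 2^N <.. real B / 2^N} \<times> S) x *\<^sub>R \<phi> x
      = (\<Sum>l\<in>{A..<B}. indicator (dyadic_Ioc N l \<times> S) x *\<^sub>R \<phi> x)" for x
    by (cases x) (simp only: indicator_times split sum_distrib_right real_scaleR_def fst_conv snd_conv)
  show ?thesis
    unfolding set_lebesgue_integral_def ind
    by (intro Bochner_Integration.integral_sum) (use int in \<open>simp add: set_integrable_def\<close>)
qed

lemma set_integrable_dyadic_rectangle:
  assumes meas: "\<And>l. l < 2^N \<Longrightarrow> f l \<in> borel_measurable borel"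
    and l: "l < 2^N" and bnd: "\<And>\<theta>. \<bar>f l \<theta>\<bar> \<le> L"
  shows "set_integrable lborel (dyadic_Ioc N l \<times> {a<..b}) (\<lambda>x. fst x * rho N f t x)"
proof -
  have [measurable]: "rho N f t \<in> borel_measurable (lborel \<Otimes>\<^sub>M lborel)"
    using rho_measurable[OF meas] by (simp add: lborel_prod)
  have "set_integrable (lborel \<Otimes>\<^sub>M lborel) (dyadic_Ioc N l \<times> {a<..b}) (\<lambda>x. fst x * rho N f t x)"
    by (rule set_integrable_rectangle_bounded[where K=L])
       (use abs_fst_mult_rho_le[of l N _ f L t] l bnd in auto)
  then show ?thesis
    by (simp only: lborel_prod)
qed

lemma abs_set_integral_sector_le:
  assumes meas: "\<And>l. l < 2^N \<Longrightarrow> f l \<in> borel_measurable borel"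
    and prof: "\<And>l. l < 2^N \<Longrightarrow> periodic_profile (f l) L"
    and t: "0 < t" and AB: "A \<le> B" "B \<le> 2^N" and ab: "0 \<le> a" "a \<le> b"
  shows "\<bar>LINT x:{real A / 2^N <.. real B / 2^N} \<times> {a<..b}|lborel. fst x * rho N f t x\<bar>
    \<le> real (B - A) * (2 * (b - a) * L / t * (real B / 2^N))"
proof -
  let ?C = "2 * (b - a) * L / t"
  have piece: "\<bar>LINT x:dyadic_Ioc N l \<times> {a<..b}|lborel. fst x * rho N f t x\<bar> \<le> ?C * (real B / 2^N)"
    if "l \<in> {A..<B}" for l
  proof -
    have l: "l < 2^N"
      using that AB by auto
    interpret periodic_profile "f l" L
      by (rule prof[OF l])
    have "0 \<le> ?C"
      using ab t bounded[of 0] by simp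
    moreover have "(real l + 1) / 2^N \<le> real B / 2^N"
      using that by (simp add: divide_right_mono)
    ultimately have "?C * ((real l + 1) / 2^N) \<le> ?C * (real B / 2^N)"
      by (rule mult_left_mono[rotated])
    moreover have "(LINT x:dyadic_Ioc N l \<times> {a<..b}|lborel. fst x * rho N f t x)
        = integral {real l / 2^N..(real l + 1) / 2^N} (\<lambda>r. r * window_integral (f l) a b (2*pi*t*r))"
      by (rule set_integral_dyadic_rectangle[where f=f, OF meas l prof[OF l] ab(2)])
    moreover have "\<bar>integral {real l / 2^N..(real l + 1) / 2^N} (\<lambda>r. r * window_integral (f l) a b (2*pi*t*r))\<bar>
        \<le> ?C * ((real l + 1) / 2^N)"
      by (rule window_integral_oscillatory_le) (simp_all add: ab t divide_right_mono)
    ultimately show ?thesis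
      by linarith
  qed
  have int: "set_integrable lborel (dyadic_Ioc N l \<times> {a<..b}) (\<lambda>x. fst x * rho N f t x)"
    if "l \<in> {A..<B}" for l
  proof -
    have l: "l < 2^N"
      using that AB by auto
    show ?thesis
      by (rule set_integrable_dyadic_rectangle[where f=f, OF meas l periodic_profile.bounded[OF prof[OF l]]])
  qed
  have "\<bar>\<Sum>l\<in>{A..<B}. LINT x:dyadic_Ioc N l \<times> {a<..b}|lborel. fst x * rho N f t x\<bar>
      \<le> (\<Sum>l\<in>{A..<B}. ?C * (real B / 2^N))"
    by (rule order_trans[OF sum_abs sum_mono[OF piece]])
  then show ?thesis
    by (simp only: set_integral_Ioc_times_split_dyadic[OF AB(1) int] sum_constant card_atLeastLessThan)
qed

lemma Qcell_angular_width:
  "2*pi*((real j + 1) / (real i + 1)) - 2*pi*(real j / (real i + 1)) = 2*pi / (real i + 1)"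
proof -
  have "2*pi*((real j + 1) / (real i + 1)) - 2*pi*(real j / (real i + 1))
      = 2*pi*((real j + 1 - real j) / (real i + 1))"
    by (simp only: diff_divide_distrib right_diff_distrib)
  then show ?thesis
    by simp
qed

lemma set_integral_fst_Qcell:
  "(LINT x:Qcell M i j|lborel. fst x) = pi * (2 * real i + 1) / ((real i + 1) * 4^M)"
proof -
  have "(LINT x:Qcell M i j|lborel. fst x)
      = 2*pi / (real i + 1) * ((((real i + 1) / 2^M)^2 - (real i / 2^M)^2) / 2)"
    unfolding Qcell_def Qcell_angular_width[where i=i and j=j, symmetric]
    by (rule set_integral_fst_rectangle) (auto simp: divide_right_mono)
  also have "(((real i + 1) / 2^M)^2 - (real i / 2^M)^2) / 2 = (2 * real i + 1) / (2 * 4^M)"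
    by (simp add: power_divide power2_eq_square field_simps flip: power_mult_distrib)
  finally show ?thesis
    by simp
qed

lemma abs_set_integral_Qcell_le:
  assumes meas: "\<And>l. l < 2^N \<Longrightarrow> f l \<in> borel_measurable borel"
    and prof: "\<And>l. l < 2^N \<Longrightarrow> periodic_profile (f l) L"
    and t: "0 < t" and MN: "M \<le> N" and i: "i < 2^M"
  shows "\<bar>LINT x:Qcell M i j|lborel. fst x * rho N f t x\<bar> \<le> 4 * pi * 2^N * L / (t * 4^M)"
proof -
  define m where "m = (2::nat)^(N - M)"
  define c where "c = real i + 1"
  have N_eq: "(2::nat)^N = 2^M * m"
    unfolding m_def using MN by (simp flip: power_add)
  then have N_eq': "(2::real)^N = 2^M * real m"
    by (metis of_nat_mult of_nat_numeral of_nat_power)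
  moreover have "0 < real m"
    unfolding m_def by simp
  ultimately have r0: "real i / 2^M = real (i*m) / 2^N" and r1: "(real i + 1) / 2^M = real ((i+1)*m) / 2^N"
    by (simp_all add: field_simps)
  have "(i+1)*m \<le> 2^N"
    using mult_le_mono1[of "i+1" "2^M" m] i N_eq by simp
  then have "\<bar>LINT x:Qcell M i j|lborel. fst x * rho N f t x\<bar>
      \<le> real ((i+1)*m - i*m) * (2 * (2*pi / (real i + 1)) * L / t * (real ((i+1)*m) / 2^N))"
    unfolding Qcell_def r0 r1 Qcell_angular_width[where i=i and j=j, symmetric]
    by (intro abs_set_integral_sector_le[OF meas prof t]) (auto simp: divide_right_mono)
  also have "\<dots> = 4 * pi * 2^N * L / (t * 4^M)"
  proof -
    have "(4::real)^M = 2^M * 2^M"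
      by (simp flip: power_mult_distrib)
    moreover have "real ((i+1)*m - i*m) = real m"
      by (simp add: algebra_simps)
    moreover have "c \<noteq> 0"
      unfolding c_def by linarith
    ultimately show ?thesis
      unfolding r1[symmetric] c_def[symmetric] using t N_eq' by (simp add: field_simps)
  qed
  finally show ?thesis .
qed

lemma abs_polar_avg_Qcell_le:
  assumes meas: "\<And>l. l < 2^N \<Longrightarrow> f l \<in> borel_measurable borel"
    and prof: "\<And>l. l < 2^N \<Longrightarrow> periodic_profile (f l) L"
    and t: "0 < t" and MN: "M \<le> N" and i: "i < 2^M"
  shows "\<bar>polar_avg (Qcell M i j) (rho N f t)\<bar> \<le> 4 * 2^N * L / t"
proof -
  define D where "D = pi * (2 * real i + 1) / ((real i + 1) * 4^M)"
  have D: "0 < D"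
    unfolding D_def by simp
  have "\<bar>polar_avg (Qcell M i j) (rho N f t)\<bar> = \<bar>LINT x:Qcell M i j|lborel. fst x * rho N f t x\<bar> / D"
    unfolding polar_avg_def set_integral_fst_Qcell D_def[symmetric] using D by (simp add: abs_divide)
  also have "\<dots> \<le> 4 * pi * 2^N * L / (t * 4^M) / D"
    by (intro divide_right_mono abs_set_integral_Qcell_le[OF meas prof t MN i] less_imp_le[OF D])
  also have "\<dots> = 4 * 2^N * L / t * ((real i + 1) / (2 * real i + 1))"
  proof -
    have "0 < 2 * real i + 1" "(0::real) < 4^M"
      by simp_all
    then show ?thesis
      unfolding D_def using t pi_gt_zero by (simp add: divide_simps)
  qed
  also have "\<dots> \<le> 4 * 2^N * L / t"
    using t periodic_profile.bounded[OF prof, of 0 0] by (intro mult_left_le) auto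
  finally show ?thesis .
qed

lemma Qcell_sets: "Qcell M i j \<in> sets lborel"
  unfolding Qcell_def using rectangle_sets by (simp only: lborel_prod)

lemma Linf_disk_rho_nonneg:
  assumes meas: "\<And>l. l < 2^N \<Longrightarrow> f l \<in> borel_measurable borel"
    and per: "\<And>\<theta>. f 0 (\<theta> + 2*pi) = f 0 \<theta>"
  shows "0 \<le> Linf_disk (rho N f t)"
proof -
  have "AE \<theta> in lborel. ereal \<bar>f 0 \<theta>\<bar> \<le> Linf_disk (rho N f t)"
    by (rule AE_profile_le_Linf_disk) (simp_all add: meas per)
  then obtain \<theta> where "ereal \<bar>f 0 \<theta>\<bar> \<le> Linf_disk (rho N f t)"
    using AE_lborel_ex_in_Ioo[of _ 0 1] by auto
  then show ?thesis
    by (rule order_trans[rotated]) simp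
qed

lemma abs_polar_avg_le_finite_Linf_disk:
  assumes meas: "\<And>l. l < 2^N \<Longrightarrow> f l \<in> borel_measurable borel"
    and per: "\<And>l \<theta>. l < 2^N \<Longrightarrow> f l (\<theta> + 2*pi) = f l \<theta>"
    and mean: "\<And>l. l < 2^N \<Longrightarrow> (LINT \<theta>:{0..2*pi}|lborel. f l \<theta>) = 0"
    and t: "0 < t" and MN: "M \<le> N" and Q: "Q \<in> Qfam M"
    and L: "Linf_disk (rho N f t) = ereal L"
  shows "\<bar>polar_avg Q (rho N f t)\<bar> \<le> 4 * 2^N * L / t"
proof -
  obtain i j where i: "i < 2^M" and Q_eq: "Q = Qcell M i j"
    using Q unfolding Qfam_def by auto
  let ?g = "\<lambda>l. cutoff L (f l)"
  have bnd: "AE \<theta> in lborel. \<bar>f l \<theta>\<bar> \<le> L" if "l < 2^N" for l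
    using AE_profile_le_Linf_disk[of N f l t, OF meas that per[OF that]] L by simp
  have "0 \<le> L"
    using Linf_disk_rho_nonneg[of N f t] meas per L by simp
  then have prof: "periodic_profile (?g l) L" if "l < 2^N" for l
    using that by (intro periodic_profile_cutoff meas per mean bnd)
  have "polar_avg Q (rho N f t) = polar_avg Q (rho N ?g t)"
    unfolding Q_eq
  proof (rule polar_avg_cong_AE[OF Qcell_sets rho_measurable rho_measurable])
    show "AE x in lborel. rho N f t x = rho N ?g t x"
      by (rule AE_rho_eq) (use meas AE_cutoff_eq[OF bnd] in \<open>auto simp: eq_commute\<close>)
  qed (use meas in auto)
  also have "\<bar>\<dots>\<bar> \<le> 4 * 2^N * L / t"
    unfolding Q_eq by (rule abs_polar_avg_Qcell_le[OF _ prof t MN i]) (use meas in auto)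
  finally show ?thesis .
qed

lemma abs_polar_avg_le_Linf_disk:
  assumes meas: "\<And>l. l < 2^N \<Longrightarrow> f l \<in> borel_measurable borel"
    and per: "\<And>l \<theta>. l < 2^N \<Longrightarrow> f l (\<theta> + 2*pi) = f l \<theta>"
    and mean: "\<And>l. l < 2^N \<Longrightarrow> (LINT \<theta>:{0..2*pi}|lborel. f l \<theta>) = 0"
    and t: "0 < t" and MN: "M \<le> N" and Q: "Q \<in> Qfam M" and c: "4 * 2^N / t \<le> c"
  shows "ereal \<bar>polar_avg Q (rho N f t)\<bar> \<le> ereal c * Linf_disk (rho N f t)"
proof -
  have nonneg: "0 \<le> Linf_disk (rho N f t)"
    by (rule Linf_disk_rho_nonneg) (simp_all add: meas per)
  have "0 < 4 * 2^N / t"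
    using t by simp
  then have "0 < c"
    using c by linarith
  then show ?thesis
  proof (cases "Linf_disk (rho N f t)")
    case (real L)
    have "\<bar>polar_avg Q (rho N f t)\<bar> \<le> 4 * 2^N / t * L"
      using abs_polar_avg_le_finite_Linf_disk[OF meas per mean t MN Q real] by simp
    also have "\<dots> \<le> c * L"
      using c nonneg real by (intro mult_right_mono) auto
    finally show ?thesis
      using real by simp
  qed (use nonneg in simp_all)
qed

theorem lemma2p7:
  "\<exists>C::real. \<forall>(N::nat) (\<kappa>::real) (f::nat \<Rightarrow> real \<Rightarrow> real).
     (0 < \<kappa> \<and> \<kappa> < 1 \<and>
      (\<forall>l<2^N. f l \<in> borel_measurable lborel
               \<and> (\<exists>B. AE \<theta> in lborel. \<bar>f l \<theta>\<bar> \<le> B)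
               \<and> (\<forall>\<theta>. f l (\<theta> + 2 * pi) = f l \<theta>)
               \<and> (LINT \<theta>:{0..2*pi}|lborel. f l \<theta>) = 0))
     \<longrightarrow> (\<forall>M\<le>N. \<forall>Q\<in>Qfam M.
           (\<forall>t::real. t \<ge> C * 2^N / \<kappa> \<longrightarrow>
              ereal \<bar>polar_avg Q (rho N f t)\<bar> \<le> ereal (\<kappa> / 4) * Linf_disk (rho N f t))
         \<and> (\<forall>t::real. t \<ge> C * 2^(M+N) \<longrightarrow>
              ereal \<bar>polar_avg Q (rho N f t)\<bar> \<le> ereal (1 / 2^M) * Linf_disk (rho N f t)))"
proof (intro exI[of _ 16] allI impI ballI conjI)
  fix N :: nat and \<kappa> :: real and f :: "nat \<Rightarrow> real \<Rightarrow> real" and M :: nat and Q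
  assume H: "0 < \<kappa> \<and> \<kappa> < 1 \<and>
      (\<forall>l<2^N. f l \<in> borel_measurable lborel
               \<and> (\<exists>B. AE \<theta> in lborel. \<bar>f l \<theta>\<bar> \<le> B)
               \<and> (\<forall>\<theta>. f l (\<theta> + 2 * pi) = f l \<theta>)
               \<and> (LINT \<theta>:{0..2*pi}|lborel. f l \<theta>) = 0)"
    and MN: "M \<le> N" and Q: "Q \<in> Qfam M"
  have meas: "\<And>l. l < 2^N \<Longrightarrow> f l \<in> borel_measurable borel"
    and per: "\<And>l \<theta>. l < 2^N \<Longrightarrow> f l (\<theta> + 2*pi) = f l \<theta>"
    and mean: "\<And>l. l < 2^N \<Longrightarrow> (LINT \<theta>:{0..2*pi}|lborel. f l \<theta>) = 0"
    using H by auto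
  note bound = abs_polar_avg_le_Linf_disk[OF meas per mean _ MN Q]
  show "ereal \<bar>polar_avg Q (rho N f t)\<bar> \<le> ereal (\<kappa> / 4) * Linf_disk (rho N f t)"
    if "16 * 2^N / \<kappa> \<le> t" for t
  proof (rule bound)
    have "0 < 16 * 2^N / \<kappa>"
      using H by simp
    then show "0 < t"
      using that by linarith
    then show "4 * 2^N / t \<le> \<kappa> / 4"
      using that H by (simp add: field_simps)
  qed
  show "ereal \<bar>polar_avg Q (rho N f t)\<bar> \<le> ereal (1 / 2^M) * Linf_disk (rho N f t)"
    if "16 * 2^(M+N) \<le> t" for t
  proof (rule bound)
    have "0 < (16::real) * 2^(M+N)"
      by simp
    then show "0 < t"
      using that by linarith
    then show "4 * 2^N / t \<le> 1 / 2^M"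
      using that by (simp add: field_simps power_add)
  qed
qed

end
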